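(* Let $n>2$ be an integer, $a,c\in\mathbb{R}$ and $b\in\mathbb{R}$ with $b\neq0$. Let $M=m_n(a,b,c)$ be the $(n+1)\times(n+1)$ real symmetric matrix with rows and columns indexed $0,1,\dots,n$, whose $(0,0)$-entry is $-nc$, whose $(0,j)$- and $(j,0)$-entries equal $b$ for $j=1,\dots,n$, and whose lower-right $n\times n$ block (indices $1,\dots,n$) is the circulant matrix $\mathrm{circ}(c,a,0,\dots,0,a)$, i.e. its $(j,j)$-entry is $c$, its $(j,j')$-entry is $a$ when $j'\equiv j\pm1 \pmod n$, and all other entries are $0$. Put $\varphi=2\pi/n$, $\omega=e^{\mathrm{i}\varphi}$, \[\Delta=\bigl(2a+(n+1)c\bigr)^2+4nb^2,\qquad \beta_\pm=-\frac{2a+(n+1)c\mp\sqrt{\Delta}}{2b},\] \[\lambda_\pm=b\beta_\pm+2a+c=\tfrac12\bigl(2a-(n-1)c\pm\sqrt\Delta\bigr),\qquad \lambda_k=c+2a\cos(k\varphi)\ (k=1,\dots,n-1).\] Let $\bm w_\pm=[\beta_\pm,1,1,\dots,1]^{\mathsf T}\in\mathbb{R}^{n+1}$ and $\bm w_k=[0,1,\omega^k,\omega^{2k},\dots,\omega^{(n-1)k}]^{\mathsf T}\in\mathbb{C}^{n+1}$ for $k=1,\dots,n-1$. Then $(\lambda_-,\bm w_-)$, $(\lambda_+,\bm w_+)$ and $(\lambda_k,\bm w_k)$, $k=1,\dots,n-1$, are the eigenpairs of $M$: $M\bm w_\pm=\lambda_\pm\bm w_\pm$, $M\bm w_k=\lambda_k\bm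 w_k$, and the $n+1$ vectors $\bm w_-,\bm w_+,\bm w_1,\dots,\bm w_{n-1}$ are linearly independent. *)

theory Defs
  imports "Jordan_Normal_Form.VS_Connect"
begin

definition m_mat :: "nat \<Rightarrow> real \<Rightarrow> real \<Rightarrow> real \<Rightarrow> real mat" where
  "m_mat n a b c = mat (n+1) (n+1) (\<lambda>(i,j).
     if i = 0 \<and> j = 0 then - (real n * c)
     else if i = 0 \<or> j = 0 then b
     else if i = j then c
     else if (int j - int i) mod int n = 1 \<or> (int i - int j) mod int n = 1 then a
     else 0)"

text \<open>Linear independence of a finite family of complex vectors of dimension d
  (library notion from the vector-space connection of Jordan_Normal_Form,
  plus distinctness so that it is independence of the family, not just its set).\<close>
definition lin_indpt_family :: "nat \<Rightarrow> complex vec list \<Rightarrow> bool" where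
  "lin_indpt_family d ws \<longleftrightarrow> distinct ws \<and> set ws \<subseteq> carrier_vec d \<and>
     \<not> module.lin_dep class_ring (module_vec TYPE(complex) d) (set ws)"

end

theory Submission
  imports Defs "HOL-Library.Quadratic_Discriminant"
begin

(* The circulant block circ(c, a, 0, ..., 0, a) is diagonalised by the Fourier vectors
   (omega^(j k))_j, with eigenvalue c + a (omega^k + omega^(-k)) = c + 2 a cos (k phi).
   Bordering such a vector by a corner entry x couples it to the corner only through
   sum_j omega^(j k), which vanishes unless n divides k.  Hence (0, omega^(j k))_j is an
   eigenvector for 0 < k < n, while for k = 0 the vector (beta, 1, ..., 1) is one exactly
   when b beta^2 + (2a + (n+1) c) beta - n b = 0, a quadratic with discriminant Delta > 0.
   Linear independence follows from the invertibility of the discrete Fourier transform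
   together with beta_+ <> beta_-. *)

definition unit_root :: "nat \<Rightarrow> complex" where
  "unit_root n = cis (2 * pi / real n)"

lemma unit_root_pow_self [simp]: "unit_root n ^ n = 1"
  by (cases "n = 0") (simp_all add: unit_root_def DeMoivre)

lemma unit_root_pow_mult_self [simp]:
  "unit_root n ^ (n * k) = 1" "unit_root n ^ (k * n) = 1"
  by (simp_all add: power_mult mult.commute[of k n])

lemma unit_root_pow_mod: "unit_root n ^ (m mod n) = unit_root n ^ m"
proof -
  have "unit_root n ^ m = unit_root n ^ (n * (m div n) + m mod n)"
    by simp
  also have "\<dots> = (unit_root n ^ n) ^ (m div n) * unit_root n ^ (m mod n)"
    by (simp only: power_add power_mult)
  finally show ?thesis by simp
qed

lemma unit_root_pow_mod_mult: "unit_root n ^ ((m mod n) * k) = unit_root n ^ (m * k)"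
  by (metis mod_mult_left_eq unit_root_pow_mod)

lemma unit_root_pow_eq_iff:
  assumes "n > 0"
  shows "unit_root n ^ j = unit_root n ^ k \<longleftrightarrow> j mod n = k mod n"
proof -
  have inj: "inj_on (\<lambda>k. cis (2 * pi * real k / real n)) {..<n}"
    using bij_betw_roots_unity[OF assms] by (rule bij_betw_imp_inj_on)
  have pow: "unit_root n ^ m = cis (2 * pi * real m / real n)" for m
    unfolding unit_root_def DeMoivre by (simp add: field_simps)
  have "unit_root n ^ j = unit_root n ^ k \<longleftrightarrow>
      unit_root n ^ (j mod n) = unit_root n ^ (k mod n)"
    by (simp add: unit_root_pow_mod)
  also have "\<dots> \<longleftrightarrow> j mod n = k mod n"
    unfolding pow using inj_on_eq_iff[OF inj] assms by simp
  finally show ?thesis .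
qed

lemma sum_unit_root_powers:
  "(\<Sum>j<n. unit_root n ^ (j * m)) = (if n dvd m then of_nat n else 0)"
proof (cases "n dvd m")
  case True
  then have "unit_root n ^ (j * m) = 1" for j
    using unit_root_pow_mod_mult[of n m j] by (simp add: mult.commute)
  then show ?thesis using True by simp
next
  case not_dvd: False
  show ?thesis
  proof (cases "n = 0")
    case False
    let ?z = "unit_root n ^ m"
    have "?z \<noteq> 1"
      using unit_root_pow_eq_iff[of n m 0] False not_dvd by (simp add: mod_eq_0_iff_dvd)
    moreover have "?z ^ n = 1"
      by (simp flip: power_mult)
    ultimately have "(\<Sum>j<n. ?z ^ j) = 0"
      by (simp add: geometric_sum)
    moreover have "unit_root n ^ (j * m) = ?z ^ j" for j
      by (simp only: mult.commute[of j m] power_mult)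
    ultimately show ?thesis
      using not_dvd by simp
  qed simp
qed

lemma unit_root_pow_add_conj:
  "unit_root n ^ k + unit_root n ^ ((n - 1) * k) = 2 * cos (real k * (2 * pi / real n))"
proof (cases "n = 0")
  case False
  then have "k + (n - 1) * k = n * k"
    by (simp add: algebra_simps)
  then have "unit_root n ^ k * unit_root n ^ ((n - 1) * k) = unit_root n ^ (n * k)"
    by (simp only: flip: power_add)
  then have "unit_root n ^ k * unit_root n ^ ((n - 1) * k) = 1"
    by simp
  then have "unit_root n ^ ((n - 1) * k) = inverse (unit_root n ^ k)"
    by (rule inverse_unique[symmetric])
  then show ?thesis
    by (simp add: unit_root_def DeMoivre complex_eq_iff)
qed (simp add: unit_root_def)

lemma cyclic_shift_dvd_iff:
  fixes k l n :: nat
  assumes "k < n" "l < n"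
  shows "n dvd k + n - l \<longleftrightarrow> k = l"
proof
  assume "n dvd k + n - l"
  then obtain q where q: "k + n - l = n * q" ..
  have "0 < n * q" "n * q < n * 2"
    using assms unfolding q[symmetric] by linarith+
  then have "q = 1"
    by simp
  then show "k = l"
    using q assms by simp
qed (use assms in simp)

lemma cyclic_shift_inverse:
  fixes d i n :: nat
  assumes "d < n" "i < n"
  shows "((d + i) mod n + n - i) mod n = d" "((d + n - i) mod n + i) mod n = d"
proof -
  have "((d + i) mod n + n - i) mod n = ((d + i) mod n + (n - i)) mod n"
    using assms by simp
  also have "\<dots> = (d + i + (n - i)) mod n"
    by (rule mod_add_left_eq)
  also have "d + i + (n - i) = d + n"
    using assms by simp
  finally show "((d + i) mod n + n - i) mod n = d"
    using assms by simp
  have "((d + n - i) mod n + i) mod n = (d + n - i + i) mod n"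
    by (rule mod_add_left_eq)
  also have "d + n - i + i = d + n"
    using assms by simp
  finally show "((d + n - i) mod n + i) mod n = d"
    using assms by simp
qed

lemma unit_root_dft_eq_0_imp_coeff_eq_0:
  fixes f :: "nat \<Rightarrow> complex"
  assumes dft: "\<And>j. j < n \<Longrightarrow> (\<Sum>k<n. f k * unit_root n ^ (j * k)) = 0"
    and "l < n"
  shows "f l = 0"
proof -
  let ?\<omega> = "unit_root n"
  have shift: "?\<omega> ^ (j * (k + n - l)) = ?\<omega> ^ (j * (n - l)) * ?\<omega> ^ (j * k)" for j k
  proof -
    have "k + n - l = (n - l) + k"
      using \<open>l < n\<close> by simp
    then show ?thesis
      by (simp only: add_mult_distrib2 power_add)
  qed
  have "0 = (\<Sum>j<n. ?\<omega> ^ (j * (n - l)) * (\<Sum>k<n. f k * ?\<omega> ^ (j * k)))"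
    using dft by simp
  also have "\<dots> = (\<Sum>j<n. \<Sum>k<n. f k * ?\<omega> ^ (j * (k + n - l)))"
    unfolding shift by (simp add: sum_distrib_left mult_ac)
  also have "\<dots> = (\<Sum>k<n. f k * (\<Sum>j<n. ?\<omega> ^ (j * (k + n - l))))"
    by (subst sum.swap) (simp add: sum_distrib_left)
  also have "\<dots> = (\<Sum>k<n. if k = l then f k * of_nat n else 0)"
  proof (intro sum.cong refl)
    fix k assume "k \<in> {..<n}"
    then have "n dvd k + n - l \<longleftrightarrow> k = l"
      using \<open>l < n\<close> by (simp add: cyclic_shift_dvd_iff)
    then show "f k * (\<Sum>j<n. ?\<omega> ^ (j * (k + n - l))) = (if k = l then f k * of_nat n else 0)"
      unfolding sum_unit_root_powers by simp
  qed
  also have "\<dots> = f l * of_nat n"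
    using \<open>l < n\<close> by simp
  finally show ?thesis
    using \<open>l < n\<close> by simp
qed

lemma sum_cyclic_shift_unit_root_powers:
  fixes f :: "nat \<Rightarrow> complex"
  assumes "i < n"
  shows "(\<Sum>j<n. f ((j + n - i) mod n) * unit_root n ^ (j * k))
    = (\<Sum>d<n. f d * unit_root n ^ (d * k)) * unit_root n ^ (i * k)"
proof -
  have "unit_root n ^ (((d + i) mod n) * k) = unit_root n ^ (d * k) * unit_root n ^ (i * k)" for d
    by (simp only: unit_root_pow_mod_mult add_mult_distrib power_add)
  then have "(\<Sum>d<n. f d * unit_root n ^ (d * k)) * unit_root n ^ (i * k)
      = (\<Sum>d<n. f d * unit_root n ^ (((d + i) mod n) * k))"
    by (simp add: sum_distrib_right mult.assoc)
  also have "\<dots> = (\<Sum>j<n. f ((j + n - i) mod n) * unit_root n ^ (j * k))"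
    using assms
    by (intro sum.reindex_bij_witness[where i = "\<lambda>j. (j + n - i) mod n" and j = "\<lambda>d. (d + i) mod n"])
      (auto simp: cyclic_shift_inverse)
  finally show ?thesis ..
qed

lemma dim_m_mat [simp]:
  "dim_row (m_mat n a b c) = n + 1" "dim_col (m_mat n a b c) = n + 1"
  by (simp_all add: m_mat_def)

definition circ_row :: "nat \<Rightarrow> real \<Rightarrow> real \<Rightarrow> nat \<Rightarrow> real" where
  "circ_row n c a d = (if d = 0 then c else if d = 1 \<or> d = n - 1 then a else 0)"

lemma m_mat_entry_circulant:
  assumes "i < n" "j < n"
  shows "m_mat n a b c $$ (Suc i, Suc j) = circ_row n c a ((j + n - i) mod n)"
proof -
  define d where "d = (j + n - i) mod n"
  have "int (j + n - i) = (int j - int i) + int n"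
    using assms by simp
  then have "int d = ((int j - int i) + int n) mod int n"
    unfolding d_def by (simp only: zmod_int)
  then have d_int: "int d = (int j - int i) mod int n"
    by simp
  have "d = 0 \<longleftrightarrow> i = j"
    using cyclic_shift_dvd_iff[OF assms(2,1)] unfolding d_def by auto
  moreover have "(int j - int i) mod int n = 1 \<longleftrightarrow> d = 1"
    using d_int by linarith
  moreover have "(int i - int j) mod int n = 1 \<longleftrightarrow> d = n - 1" if "d \<noteq> 0"
  proof -
    have "(int i - int j) mod int n = (- int d) mod int n"
      using d_int by (simp add: mod_minus_eq)
    also have "\<dots> = int n - int d"
      using that d_int by (simp add: zmod_zminus1_eq_if)
    finally show ?thesis
      using that assms d_def by auto
  qed
  ultimately show ?thesis
    using assms unfolding m_mat_def circ_row_def d_def[symmetric] by auto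
qed

lemma m_mat_mult_vec_0:
  fixes v :: "complex vec"
  assumes "dim_vec v = n + 1"
  shows "(map_mat complex_of_real (m_mat n a b c) *\<^sub>v v) $ 0
    = - (real n * c) * v $ 0 + b * (\<Sum>j<n. v $ Suc j)"
proof -
  let ?M = "map_mat complex_of_real (m_mat n a b c)"
  have "(?M *\<^sub>v v) $ 0 = (\<Sum>j<Suc n. ?M $$ (0, j) * v $ j)"
    using assms by (simp add: m_mat_def scalar_prod_def atLeast0LessThan)
  also have "\<dots> = ?M $$ (0, 0) * v $ 0 + (\<Sum>j<n. ?M $$ (0, Suc j) * v $ Suc j)"
    by (rule sum.lessThan_Suc_shift)
  finally show ?thesis
    by (simp add: m_mat_def sum_distrib_left)
qed

lemma m_mat_mult_vec_Suc:
  fixes v :: "complex vec"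
  assumes "dim_vec v = n + 1" "i < n"
  shows "(map_mat complex_of_real (m_mat n a b c) *\<^sub>v v) $ Suc i
    = b * v $ 0 + (\<Sum>j<n. circ_row n c a ((j + n - i) mod n) * v $ Suc j)"
proof -
  let ?M = "map_mat complex_of_real (m_mat n a b c)"
  have "(?M *\<^sub>v v) $ Suc i = (\<Sum>j<Suc n. ?M $$ (Suc i, j) * v $ j)"
    using assms by (simp add: m_mat_def scalar_prod_def atLeast0LessThan)
  also have "\<dots> = ?M $$ (Suc i, 0) * v $ 0 + (\<Sum>j<n. ?M $$ (Suc i, Suc j) * v $ Suc j)"
    by (rule sum.lessThan_Suc_shift)
  also have "?M $$ (Suc i, 0) = b"
    using assms by (simp add: m_mat_def)
  also have "(\<Sum>j<n. ?M $$ (Suc i, Suc j) * v $ Suc j)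
      = (\<Sum>j<n. circ_row n c a ((j + n - i) mod n) * v $ Suc j)"
    using assms by (intro sum.cong refl) (simp add: m_mat_entry_circulant)
  finally show ?thesis .
qed

lemma sum_circ_row_unit_root_powers:
  assumes "n > 2"
  shows "(\<Sum>d<n. circ_row n c a d * unit_root n ^ (d * k))
    = complex_of_real (c + 2 * a * cos (real k * (2 * pi / real n)))"
proof -
  have "(\<Sum>d<n. circ_row n c a d * unit_root n ^ (d * k))
      = (\<Sum>d\<in>{0, 1, n - 1}. circ_row n c a d * unit_root n ^ (d * k))"
    using assms by (intro sum.mono_neutral_right) (auto simp: circ_row_def)
  also have "\<dots> = c + a * (unit_root n ^ k + unit_root n ^ ((n - 1) * k))"
    using assms by (simp add: circ_row_def algebra_simps)
  also have "\<dots> = c + a * complex_of_real (2 * cos (real k * (2 * pi / real n)))"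
    by (simp only: unit_root_pow_add_conj)
  finally show ?thesis
    by simp
qed

(* fourier_vec n \<beta>\<^sub>\<plusminus> 0 and fourier_vec n 0 k are the vectors w\<^sub>\<plusminus> and w\<^sub>k of the statement. *)
definition fourier_vec :: "nat \<Rightarrow> complex \<Rightarrow> nat \<Rightarrow> complex vec" where
  "fourier_vec n x k = vec (n + 1) (\<lambda>i. if i = 0 then x else unit_root n ^ ((i - 1) * k))"

lemma m_mat_mult_fourier_vec:
  fixes x :: complex
  assumes "n > 2"
  shows "map_mat complex_of_real (m_mat n a b c) *\<^sub>v fourier_vec n x k
    = vec (n + 1) (\<lambda>i. if i = 0 then - (real n * c) * x + b * (if n dvd k then of_nat n else 0)
        else b * x + complex_of_real (c + 2 * a * cos (real k * (2 * pi / real n)))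
          * unit_root n ^ ((i - 1) * k))"
  (is "?M *\<^sub>v ?v = ?w")
proof (rule eq_vecI)
  show "dim_vec (?M *\<^sub>v ?v) = dim_vec ?w"
    by (simp add: m_mat_def)
  fix i assume "i < dim_vec ?w"
  then have i: "i < n + 1" by simp
  have dim: "dim_vec ?v = n + 1"
    by (simp add: fourier_vec_def)
  show "(?M *\<^sub>v ?v) $ i = ?w $ i"
  proof (cases i)
    case 0
    then show ?thesis
      using m_mat_mult_vec_0[OF dim] by (simp add: fourier_vec_def sum_unit_root_powers)
  next
    case (Suc i')
    then have "i' < n" using i by simp
    have "(\<Sum>j<n. circ_row n c a ((j + n - i') mod n) * ?v $ Suc j)
        = (\<Sum>d<n. complex_of_real (circ_row n c a d) * unit_root n ^ (d * k)) * unit_root n ^ (i' * k)"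
      using sum_cyclic_shift_unit_root_powers[OF \<open>i' < n\<close>, of "\<lambda>d. complex_of_real (circ_row n c a d)"]
      by (simp add: fourier_vec_def)
    then show ?thesis
      using m_mat_mult_vec_Suc[OF dim \<open>i' < n\<close>] Suc i
      by (simp add: fourier_vec_def sum_circ_row_unit_root_powers[OF assms])
  qed
qed

lemma m_mat_eigenvector_border:
  assumes "n > 2" and root: "b * \<beta>\<^sup>2 + (2 * a + (real n + 1) * c) * \<beta> - real n * b = 0"
  shows "map_mat complex_of_real (m_mat n a b c) *\<^sub>v fourier_vec n \<beta> 0
    = complex_of_real (b * \<beta> + 2 * a + c) \<cdot>\<^sub>v fourier_vec n \<beta> 0"
proof -
  have "- (real n * c) * \<beta> + b * real n = (b * \<beta> + 2 * a + c) * \<beta>"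
    using root by (simp add: algebra_simps power2_eq_square)
  then have "complex_of_real (- (real n * c) * \<beta> + b * real n)
      = complex_of_real ((b * \<beta> + 2 * a + c) * \<beta>)"
    by simp
  then show ?thesis
    unfolding m_mat_mult_fourier_vec[OF \<open>n > 2\<close>]
    by (intro eq_vecI) (auto simp: fourier_vec_def algebra_simps)
qed

lemma m_mat_eigenvector_fourier:
  assumes "n > 2" "\<not> n dvd k"
  shows "map_mat complex_of_real (m_mat n a b c) *\<^sub>v fourier_vec n 0 k
    = complex_of_real (c + 2 * a * cos (real k * (2 * pi / real n))) \<cdot>\<^sub>v fourier_vec n 0 k"
  unfolding m_mat_mult_fourier_vec[OF assms(1)]
  using assms(2) by (intro eq_vecI) (auto simp: fourier_vec_def)

lemma lin_indpt_family_if_kernel_trivial: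
  fixes ws :: "complex vec list"
  assumes ws: "set ws \<subseteq> carrier_vec d" "length ws = d"
    and kernel: "\<And>x. x \<in> carrier_vec d \<Longrightarrow> mat_of_cols d ws *\<^sub>v x = 0\<^sub>v d \<Longrightarrow> x = 0\<^sub>v d"
  shows "lin_indpt_family d ws"
proof -
  interpret V: vec_space "TYPE(complex)" d .
  let ?A = "mat_of_cols d ws"
  have A: "?A \<in> carrier_mat d d"
    using ws(2) by auto
  have det: "det ?A \<noteq> 0"
    using kernel by (auto simp: det_0_iff_vec_prod_zero[OF A])
  have "distinct ws"
  proof (rule ccontr)
    assume "\<not> distinct ws"
    then obtain i j where ij: "i \<noteq> j" "i < d" "j < d" "ws ! i = ws ! j"
      using ws(2) by (auto simp: distinct_conv_nth)
    then have "col ?A i = col ?A j"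
      using ws by (simp add: subsetD)
    then show False
      using det_identical_columns[OF A ij(1-3)] det by simp
  qed
  moreover have "\<not> V.lin_dep (set ws)"
  proof
    have "\<forall>w\<in>set ws. dim_vec w = d"
      using ws(1) by auto
    moreover assume "V.lin_dep (set ws)"
    ultimately have "det ?A = 0"
      using V.lin_dep_cols_imp_det_0'[OF _ A] ws(1) by simp
    with det show False ..
  qed
  ultimately show ?thesis
    unfolding lin_indpt_family_def using ws by simp
qed

lemma mat_of_cols_fourier_vecs_mult_vec:
  fixes n :: nat and \<beta> \<gamma> :: complex
  defines "W \<equiv> mat_of_cols (n + 1)
    ([fourier_vec n \<beta> 0, fourier_vec n \<gamma> 0] @ map (fourier_vec n 0) [1..<n])"
  assumes "n > 0" "x \<in> carrier_vec (n + 1)"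
  shows "(W *\<^sub>v x) $ 0 = \<beta> * x $ 0 + \<gamma> * x $ 1"
    and "i < n \<Longrightarrow> (W *\<^sub>v x) $ Suc i
      = (\<Sum>k<n. (if k = 0 then x $ 0 + x $ 1 else x $ Suc k) * unit_root n ^ (i * k))"
proof -
  let ?ws = "[fourier_vec n \<beta> 0, fourier_vec n \<gamma> 0] @ map (fourier_vec n 0) [1..<n]"
  have "length ?ws = Suc (Suc (n - 1))"
    using assms(2) by simp
  then have "(W *\<^sub>v x) $ r = (\<Sum>j<Suc (Suc (n - 1)). ?ws ! j $ r * x $ j)" if "r < n + 1" for r
    using assms that by (simp add: mat_of_cols_def scalar_prod_def atLeast0LessThan)
  then have row: "(W *\<^sub>v x) $ r = fourier_vec n \<beta> 0 $ r * x $ 0 + fourier_vec n \<gamma> 0 $ r * x $ 1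
      + (\<Sum>k<n - 1. fourier_vec n 0 (Suc k) $ r * x $ Suc (Suc k))" if "r < n + 1" for r
    using that by (simp only: sum.lessThan_Suc_shift) (simp add: add.assoc)
  show "(W *\<^sub>v x) $ 0 = \<beta> * x $ 0 + \<gamma> * x $ 1"
    using row[of 0] by (simp add: fourier_vec_def)
  assume "i < n"
  have "(\<Sum>k<Suc (n - 1). (if k = 0 then x $ 0 + x $ 1 else x $ Suc k) * unit_root n ^ (i * k))
      = x $ 0 + x $ 1 + (\<Sum>k<n - 1. x $ Suc (Suc k) * unit_root n ^ (i * Suc k))"
    by (simp only: sum.lessThan_Suc_shift) simp
  then show "(W *\<^sub>v x) $ Suc i
      = (\<Sum>k<n. (if k = 0 then x $ 0 + x $ 1 else x $ Suc k) * unit_root n ^ (i * k))"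
    using row[of "Suc i"] \<open>i < n\<close> by (simp add: fourier_vec_def mult.commute)
qed

lemma lin_indpt_family_fourier_vecs:
  fixes \<beta> \<gamma> :: complex
  assumes "n > 0" "\<beta> \<noteq> \<gamma>"
  shows "lin_indpt_family (n + 1)
    ([fourier_vec n \<beta> 0, fourier_vec n \<gamma> 0] @ map (fourier_vec n 0) [1..<n])"
    (is "lin_indpt_family _ ?ws")
proof (rule lin_indpt_family_if_kernel_trivial)
  show "length ?ws = n + 1"
    using assms(1) by simp
  show "set ?ws \<subseteq> carrier_vec (n + 1)"
    by (auto simp: fourier_vec_def)
  fix x :: "complex vec"
  assume x: "x \<in> carrier_vec (n + 1)" and ker: "mat_of_cols (n + 1) ?ws *\<^sub>v x = 0\<^sub>v (n + 1)"
  note W_mult = mat_of_cols_fourier_vecs_mult_vec[OF assms(1) x, where \<beta> = \<beta> and \<gamma> = \<gamma>, unfolded ker]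
  have "(\<Sum>k<n. (if k = 0 then x $ 0 + x $ 1 else x $ Suc k) * unit_root n ^ (i * k)) = 0"
    if "i < n" for i
    using W_mult(2)[OF that, symmetric] that by simp
  then have coeff_0: "(if k = 0 then x $ 0 + x $ 1 else x $ Suc k) = 0" if "k < n" for k
    using that by (rule unit_root_dft_eq_0_imp_coeff_eq_0)
  have x_1: "x $ 1 = - x $ 0"
    using coeff_0[of 0] assms(1) by (simp add: add_eq_0_iff)
  then have "(\<beta> - \<gamma>) * x $ 0 = 0"
    using W_mult(1) by (auto simp: algebra_simps)
  then have x_01: "x $ 0 = 0" "x $ 1 = 0"
    using assms(2) x_1 by simp_all
  have "x $ i = 0" if "i < n + 1" for i
  proof (cases "i \<le> 1")
    case True
    then show ?thesis
      using x_01 by (auto simp: le_Suc_eq)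
  next
    case False
    then show ?thesis
      using coeff_0[of "i - 1"] that by simp
  qed
  then show "x = 0\<^sub>v (n + 1)"
    using x by (intro eq_vecI) auto
qed

lemma quadratic_root_formula:
  fixes b S q \<Delta> \<beta> :: real
  assumes "b \<noteq> 0" "\<Delta> = S\<^sup>2 + 4 * q * b\<^sup>2" "0 \<le> \<Delta>"
    and "\<beta> = - (S - sqrt \<Delta>) / (2 * b) \<or> \<beta> = - (S + sqrt \<Delta>) / (2 * b)"
  shows "b * \<beta>\<^sup>2 + S * \<beta> - q * b = 0"
proof -
  have "discrim b S (- (q * b)) = \<Delta>"
    using assms(2) by (simp add: discrim_def power2_eq_square)
  then show ?thesis
    using discriminant_nonneg[OF assms(1), of S "- (q * b)" \<beta>] assms(3,4)
    by (auto simp: algebra_simps)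
qed

theorem theorem4:
  fixes n :: nat and a b c :: real
    and M :: "complex mat" and \<phi> \<Delta> \<beta>p \<beta>m lamp lamm :: real and \<omega> :: complex
    and lam :: "nat \<Rightarrow> real" and wp wm :: "complex vec" and w :: "nat \<Rightarrow> complex vec"
  assumes hn: "n > 2" and hb: "b \<noteq> 0"
      and M_def: "M = map_mat complex_of_real (m_mat n a b c)"
      and phi_def: "\<phi> = 2 * pi / real n"
      and omega_def: "\<omega> = exp (\<i> * complex_of_real \<phi>)"
      and Delta_def: "\<Delta> = (2*a + (real n + 1) * c)^2 + 4 * real n * b^2"
      and betap_def: "\<beta>p = - (2*a + (real n + 1) * c - sqrt \<Delta>) / (2*b)"
      and betam_def: "\<beta>m = - (2*a + (real n + 1) * c + sqrt \<Delta>) / (2*b)"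
      and lamp_def: "lamp = b * \<beta>p + 2*a + c"
      and lamm_def: "lamm = b * \<beta>m + 2*a + c"
      and lam_def: "\<And>k. lam k = c + 2 * a * cos (real k * \<phi>)"
      and wp_def: "wp = vec (n+1) (\<lambda>i. if i = 0 then complex_of_real \<beta>p else 1)"
      and wm_def: "wm = vec (n+1) (\<lambda>i. if i = 0 then complex_of_real \<beta>m else 1)"
      and w_def: "\<And>k. w k = vec (n+1) (\<lambda>i. if i = 0 then 0 else \<omega> ^ ((i - 1) * k))"
  shows "lamp = (2*a - (real n - 1) * c + sqrt \<Delta>) / 2
    \<and> lamm = (2*a - (real n - 1) * c - sqrt \<Delta>) / 2
    \<and> M *\<^sub>v wp = complex_of_real lamp \<cdot>\<^sub>v wp
    \<and> M *\<^sub>v wm = complex_of_real lamm \<cdot>\<^sub>v wm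
    \<and> (\<forall>k\<in>{1..n-1}. M *\<^sub>v w k = complex_of_real (lam k) \<cdot>\<^sub>v w k)
    \<and> lin_indpt_family (n+1) ([wm, wp] @ map w [1..<n])"
proof -
  define S where "S = 2 * a + (real n + 1) * c"
  have "\<Delta> > 0"
    using hn hb unfolding Delta_def by (simp add: add_nonneg_pos)
  have roots: "b * \<beta>p\<^sup>2 + S * \<beta>p - real n * b = 0" "b * \<beta>m\<^sup>2 + S * \<beta>m - real n * b = 0"
    using \<open>\<Delta> > 0\<close>
    by (intro quadratic_root_formula[OF hb Delta_def[folded S_def]]; simp add: betap_def betam_def S_def)+
  have "\<beta>p \<noteq> \<beta>m"
    using \<open>\<Delta> > 0\<close> hb unfolding betap_def betam_def by (auto simp: field_simps)
  have "\<omega> = unit_root n"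
    unfolding omega_def phi_def unit_root_def cis_conv_exp by simp
  then have vecs: "wp = fourier_vec n \<beta>p 0" "wm = fourier_vec n \<beta>m 0" "\<And>k. w k = fourier_vec n 0 k"
    unfolding wp_def wm_def w_def fourier_vec_def by (simp_all cong: if_cong)
  have "lamp = (2*a - (real n - 1) * c + sqrt \<Delta>) / 2" "lamm = (2*a - (real n - 1) * c - sqrt \<Delta>) / 2"
    using hb unfolding lamp_def lamm_def betap_def betam_def by (simp_all add: field_simps)
  moreover have "M *\<^sub>v wp = complex_of_real lamp \<cdot>\<^sub>v wp" "M *\<^sub>v wm = complex_of_real lamm \<cdot>\<^sub>v wm"
    using m_mat_eigenvector_border[OF hn roots(1)[unfolded S_def]]
      m_mat_eigenvector_border[OF hn roots(2)[unfolded S_def]]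
    unfolding M_def vecs lamp_def lamm_def by simp_all
  moreover have "\<forall>k\<in>{1..n-1}. M *\<^sub>v w k = complex_of_real (lam k) \<cdot>\<^sub>v w k"
  proof
    fix k assume "k \<in> {1..n-1}"
    then have "\<not> n dvd k"
      using hn by (auto dest: dvd_imp_le)
    then show "M *\<^sub>v w k = complex_of_real (lam k) \<cdot>\<^sub>v w k"
      unfolding M_def vecs lam_def phi_def by (rule m_mat_eigenvector_fourier[OF hn])
  qed
  moreover have "lin_indpt_family (n+1) ([wm, wp] @ map w [1..<n])"
    unfolding vecs using lin_indpt_family_fourier_vecs[of n \<beta>m \<beta>p] hn \<open>\<beta>p \<noteq> \<beta>m\<close> by simp
  ultimately show ?thesis
    by blast
qed

end
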